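(* Let $D$ be an oriented knot diagram and let $b$ be a point of $D$ that is not a crossing. Run the robot on $D$ starting at $b$. Then the resulting diagram (the post-robot diagram) is ascending from $b$.
   Context: The robot operates as follows: starting at $b$, it travels along the knot in the direction of the orientation, visiting every crossing twice, and stops when it returns to $b$. Whenever it arrives at a crossing along the over-strand, it leaves the crossing unchanged; whenever it arrives at a crossing along the under-strand, it switches that crossing so that the strand it is travelling on becomes the over-strand, and then passes through. The diagram obtained at the end is the post-robot diagram. An oriented knot diagram is ascending from a point $b$ (not a crossing) if, travelling along the knot from $b$ in the direction of the orientation, every crossing is first met along its under-strand and later along its over-strand; it is descending from $b$ if every crossing is first met along its over-strand. *)

theory Defs
  imports Main
begin

text \<open>
  An oriented knot diagram together with a non-crossing base point b is encoded by its
  Gauss code read from b in the direction of the orientation: the list of the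
  crossing passages met in order.  Each entry (c, ov) records the crossing label c and
  whether the knot passes c along its over-strand (ov = True) or under-strand (ov = False).
\<close>

type_synonym 'c gauss_code = "('c \<times> bool) list"

definition gauss_wf :: "'c gauss_code \<Rightarrow> bool" where
  "gauss_wf g \<longleftrightarrow>
     (\<forall>c \<in> fst ` set g.
        length (filter (\<lambda>p. fst p = c) g) = 2 \<and> (c, True) \<in> set g \<and> (c, False) \<in> set g)"

definition switch_crossing :: "'c \<Rightarrow> 'c gauss_code \<Rightarrow> 'c gauss_code" where
  "switch_crossing c g = map (\<lambda>(x, ov). if x = c then (x, \<not> ov) else (x, ov)) g"

definition robot_step :: "nat \<Rightarrow> 'c gauss_code \<Rightarrow> 'c gauss_code" where
  "robot_step i g = (if snd (g ! i) then g else switch_crossing (fst (g ! i)) g)"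

definition robot :: "'c gauss_code \<Rightarrow> 'c gauss_code" where
  "robot g = fold robot_step [0..<length g] g"

definition ascending :: "'c gauss_code \<Rightarrow> bool" where
  "ascending g \<longleftrightarrow>
     (\<forall>i j. i < j \<and> j < length g \<and> fst (g ! i) = fst (g ! j)
        \<longrightarrow> \<not> snd (g ! i) \<and> snd (g ! j))"

end

theory Submission
  imports Defs
begin

text \<open>
  The robot leaves the crossing of every passage it has just traversed with that passage
  on top. A crossing is passed twice, so when the robot later arrives at its second
  passage it finds that passage under and switches the crossing, pushing the first
  passage under. Hence, once the first k passages have been traversed, passage i < k is
  over exactly when the crossing of i does not occur again before k; for k the full
  length this says that the first passage of every crossing is under and the second over.
\<close>

text \<open>The part of \<^const>\<open>gauss_wf\<close> that survives switching crossings; it still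
  forces every crossing to be passed at most twice.\<close>
definition passages_opposite :: "'c gauss_code \<Rightarrow> bool" where
  "passages_opposite g \<longleftrightarrow>
     (\<forall>i < length g. \<forall>j < length g.
        i \<noteq> j \<and> fst (g ! i) = fst (g ! j) \<longrightarrow> snd (g ! i) \<noteq> snd (g ! j))"

lemma passages_oppositeD:
  "passages_opposite g \<Longrightarrow> i < length g \<Longrightarrow> j < length g \<Longrightarrow> i \<noteq> j \<Longrightarrow>
    fst (g ! i) = fst (g ! j) \<Longrightarrow> snd (g ! i) \<noteq> snd (g ! j)"
  unfolding passages_opposite_def by blast

text \<open>Three pairwise different booleans do not exist.\<close>
lemma passages_opposite_no_third_passage:
  assumes "passages_opposite g" "i < j" "j < l" "l < length g"
    and "fst (g ! i) = fst (g ! j)" "fst (g ! j) = fst (g ! l)"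
  shows False
  using passages_oppositeD[OF assms(1), of i j] passages_oppositeD[OF assms(1), of j l]
    passages_oppositeD[OF assms(1), of i l] assms(2-) by auto

lemma gauss_wf_passages_opposite:
  assumes "gauss_wf g"
  shows "passages_opposite g"
  unfolding passages_opposite_def
proof (intro allI impI)
  fix i j
  assume i: "i < length g" and j: "j < length g"
    and same: "i \<noteq> j \<and> fst (g ! i) = fst (g ! j)"
  let ?c = "fst (g ! i)"
  let ?P = "{p. p < length g \<and> fst (g ! p) = ?c}"
  have c: "?c \<in> fst ` set g" using i by auto
  then have "length (filter (\<lambda>p. fst p = ?c) g) = 2"
    and over: "(?c, True) \<in> set g" and under: "(?c, False) \<in> set g"
    using assms unfolding gauss_wf_def by blast+
  then have "card ?P = 2" by (simp add: length_filter_conv_card)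
  moreover have "{i, j} \<subseteq> ?P" using i j same by auto
  moreover have "card {i, j} = 2" using same by simp
  moreover have "finite ?P" by simp
  ultimately have P: "?P = {i, j}" by (metis card_subset_eq)
  obtain a where "a < length g" "g ! a = (?c, True)"
    using over by (auto simp: in_set_conv_nth)
  then have "a \<in> {i, j}" "snd (g ! a)" using P by (force, simp)
  moreover obtain b where "b < length g" "g ! b = (?c, False)"
    using under by (auto simp: in_set_conv_nth)
  then have "b \<in> {i, j}" "\<not> snd (g ! b)" using P by (force, simp)
  ultimately show "snd (g ! i) \<noteq> snd (g ! j)" by auto
qed

lemma map_fst_switch_crossing [simp]: "map fst (switch_crossing c g) = map fst g"
  by (induction g) (auto simp: switch_crossing_def)

lemma length_switch_crossing: "length (switch_crossing c g) = length g"
  by (simp add: switch_crossing_def)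

lemma nth_switch_crossing:
  "i < length g \<Longrightarrow>
    switch_crossing c g ! i = (fst (g ! i), if fst (g ! i) = c then \<not> snd (g ! i) else snd (g ! i))"
  by (auto simp: switch_crossing_def split: prod.splits)

lemma passages_opposite_switch_crossing:
  assumes "passages_opposite g"
  shows "passages_opposite (switch_crossing c g)"
  unfolding passages_opposite_def length_switch_crossing
proof (intro allI impI)
  fix i j
  assume "i < length g" "j < length g"
    and "i \<noteq> j \<and> fst (switch_crossing c g ! i) = fst (switch_crossing c g ! j)"
  then show "snd (switch_crossing c g ! i) \<noteq> snd (switch_crossing c g ! j)"
    using passages_oppositeD[OF assms, of i j] by (simp add: nth_switch_crossing)
qed

lemma map_fst_fold_robot_step [simp]: "map fst (fold robot_step ks g) = map fst g"
  by (induction ks arbitrary: g) (simp_all add: robot_step_def)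

lemma length_fold_robot_step [simp]: "length (fold robot_step ks g) = length g"
  using map_fst_fold_robot_step by (metis length_map)

lemma fst_nth_fold_robot_step [simp]:
  "i < length g \<Longrightarrow> fst (fold robot_step ks g ! i) = fst (g ! i)"
  using map_fst_fold_robot_step by (metis length_fold_robot_step nth_map)

lemma passages_opposite_fold_robot_step:
  "passages_opposite g \<Longrightarrow> passages_opposite (fold robot_step ks g)"
  by (induction ks arbitrary: g) (simp_all add: robot_step_def passages_opposite_switch_crossing)

lemma nth_robot_step:
  assumes "i < length h"
  shows "robot_step k h ! i =
    (if snd (h ! k) \<or> fst (h ! i) \<noteq> fst (h ! k) then h ! i else (fst (h ! i), \<not> snd (h ! i)))"
  using assms by (simp add: robot_step_def nth_switch_crossing)

lemma snd_nth_fold_robot_step_upt: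
  assumes "passages_opposite g" "k \<le> length g" "i < k"
  shows "snd (fold robot_step [0..<k] g ! i) \<longleftrightarrow>
    (\<forall>j. i < j \<and> j < k \<longrightarrow> fst (g ! j) \<noteq> fst (g ! i))"
  using assms(2,3)
proof (induction k arbitrary: i)
  case 0
  then show ?case by simp
next
  case (Suc k)
  let ?h = "fold robot_step [0..<k] g"
  have k: "k < length ?h" using Suc.prems by simp
  have step: "fold robot_step [0..<Suc k] g ! i =
    (if snd (?h ! k) \<or> fst (g ! i) \<noteq> fst (g ! k) then ?h ! i else (fst (?h ! i), \<not> snd (?h ! i)))"
    using Suc.prems nth_robot_step[of i ?h k] by simp
  consider "i = k" | "i < k" "fst (g ! i) = fst (g ! k)" | "i < k" "fst (g ! i) \<noteq> fst (g ! k)"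
    using Suc.prems(2) by linarith
  then show ?case
  proof cases
    case 1
    then show ?thesis using step by auto
  next
    case 2
    have "\<not> (i < j \<and> j < k \<and> fst (g ! j) = fst (g ! i))" for j
      using passages_opposite_no_third_passage[OF assms(1), of i j k] 2 Suc.prems by auto
    then have "snd (?h ! i)" using Suc.IH[of i] 2 Suc.prems by auto
    moreover have "passages_opposite ?h"
      using assms(1) by (rule passages_opposite_fold_robot_step)
    ultimately have "\<not> snd (?h ! k)"
      using passages_oppositeD[of ?h i k] 2 Suc.prems by auto
    then show ?thesis using step 2 \<open>snd (?h ! i)\<close> by auto
  next
    case 3
    then show ?thesis using step Suc.IH[of i] Suc.prems by (auto simp: less_Suc_eq)
  qed
qed

lemma length_robot [simp]: "length (robot g) = length g"
  by (simp add: robot_def)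

lemma fst_nth_robot [simp]: "i < length g \<Longrightarrow> fst (robot g ! i) = fst (g ! i)"
  by (simp add: robot_def)

lemma snd_nth_robot:
  assumes "passages_opposite g" "i < length g"
  shows "snd (robot g ! i) \<longleftrightarrow> (\<forall>j. i < j \<and> j < length g \<longrightarrow> fst (g ! j) \<noteq> fst (g ! i))"
  unfolding robot_def using snd_nth_fold_robot_step_upt[OF assms(1) order_refl assms(2)] .

theorem theorem1p2:
  fixes g :: "'c gauss_code"
  assumes "gauss_wf g"
  shows "ascending (robot g)"
  unfolding ascending_def
proof (intro allI impI)
  fix i j
  assume ij: "i < j \<and> j < length (robot g) \<and> fst (robot g ! i) = fst (robot g ! j)"
  have opp: "passages_opposite g" using assms by (rule gauss_wf_passages_opposite)
  have i: "i < length g" and j: "j < length g" and same: "fst (g ! j) = fst (g ! i)"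
    using ij by auto
  have "\<not> snd (robot g ! i)"
    unfolding snd_nth_robot[OF opp i] using ij j same by blast
  moreover have "snd (robot g ! j)"
    unfolding snd_nth_robot[OF opp j]
    using passages_opposite_no_third_passage[OF opp, of i j] ij same by (metis)
  ultimately show "\<not> snd (robot g ! i) \<and> snd (robot g ! j)" ..
qed

end
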